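(* Let $Z,Z'\subseteq A^+$. If $Z$ and $Z'$ are both prefix alt-induced codes (respectively both suffix alt-induced codes, both bifix alt-induced codes), then $ZZ'$ is a prefix (respectively suffix, bifix) alt-induced code.
   Context: $A$ is a finite alphabet, $A^+$ the set of non-empty words, $ZZ'=\{zz':z\in Z,z'\in Z'\}$. A code is a subset of $A^+$ in which every word has at most one factorization into its elements. A prefix (suffix) code is a subset of $A^+$ in which no word is a proper prefix (suffix) of another; a bifix code is both. For non-empty $X,Y\subseteq A^+$, $(X,Y)$ is an alternative code if no word of $A^+$ admits two different similar alternative factorizations on $(X,Y)$ (factorizations $u_1\cdots u_n$, $n\ge2$, $u_i\in X\cup Y$, alternating between $X$ and $Y$; similar = beginning in the same set and ending in the same set); equivalently, $XY$ is a code and the product $XY$ is unambiguous. An alt-induced code is a set $XY$ with $(X,Y)$ an alternative code; a prefix (suffix, bifix) alt-induced code is an alt-induced code that is also a prefix (suffix, bifix) code. *)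

theory Defs
  imports Main "HOL-Library.Sublist"
begin

definition Aplus :: "'a set \<Rightarrow> 'a list set" where
  "Aplus A = {w. w \<in> lists A \<and> w \<noteq> []}"

definition conc :: "'a list set \<Rightarrow> 'a list set \<Rightarrow> 'a list set" where
  "conc X Y = {x @ y | x y. x \<in> X \<and> y \<in> Y}"

definition is_code :: "'a set \<Rightarrow> 'a list set \<Rightarrow> bool" where
  "is_code A X \<longleftrightarrow> X \<subseteq> Aplus A \<and>
     (\<forall>us vs. set us \<subseteq> X \<longrightarrow> set vs \<subseteq> X \<longrightarrow> concat us = concat vs \<longrightarrow> us = vs)"

definition prefix_code :: "'a set \<Rightarrow> 'a list set \<Rightarrow> bool" where
  "prefix_code A X \<longleftrightarrow> X \<subseteq> Aplus A \<and> (\<forall>x\<in>X. \<forall>y\<in>X. \<not> strict_prefix x y)"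

definition suffix_code :: "'a set \<Rightarrow> 'a list set \<Rightarrow> bool" where
  "suffix_code A X \<longleftrightarrow> X \<subseteq> Aplus A \<and> (\<forall>x\<in>X. \<forall>y\<in>X. \<not> strict_suffix x y)"

definition bifix_code :: "'a set \<Rightarrow> 'a list set \<Rightarrow> bool" where
  "bifix_code A X \<longleftrightarrow> prefix_code A X \<and> suffix_code A X"

text \<open>The sets of all factors are
  determined by the starting set b and the position; the ending set by b and the parity of n.\<close>
definition alt_fact :: "'a list set \<Rightarrow> 'a list set \<Rightarrow> bool \<Rightarrow> 'a list list \<Rightarrow> bool" where
  "alt_fact X Y b us \<longleftrightarrow> length us \<ge> 2 \<and>
     (\<forall>i < length us. us ! i \<in> (if even i = b then X else Y))"

definition alternative_code :: "'a set \<Rightarrow> 'a list set \<Rightarrow> 'a list set \<Rightarrow> bool" where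
  "alternative_code A X Y \<longleftrightarrow> X \<subseteq> Aplus A \<and> Y \<subseteq> Aplus A \<and> X \<noteq> {} \<and> Y \<noteq> {} \<and>
     (\<forall>b us vs. alt_fact X Y b us \<longrightarrow> alt_fact X Y b vs \<longrightarrow>
        even (length us) = even (length vs) \<longrightarrow> concat us = concat vs \<longrightarrow> us = vs)"

definition alt_induced_code :: "'a set \<Rightarrow> 'a list set \<Rightarrow> bool" where
  "alt_induced_code A Z \<longleftrightarrow> (\<exists>X Y. alternative_code A X Y \<and> Z = conc X Y)"

definition prefix_alt_induced_code :: "'a set \<Rightarrow> 'a list set \<Rightarrow> bool" where
  "prefix_alt_induced_code A Z \<longleftrightarrow> alt_induced_code A Z \<and> prefix_code A Z"

definition suffix_alt_induced_code :: "'a set \<Rightarrow> 'a list set \<Rightarrow> bool" where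
  "suffix_alt_induced_code A Z \<longleftrightarrow> alt_induced_code A Z \<and> suffix_code A Z"

definition bifix_alt_induced_code :: "'a set \<Rightarrow> 'a list set \<Rightarrow> bool" where
  "bifix_alt_induced_code A Z \<longleftrightarrow> alt_induced_code A Z \<and> bifix_code A Z"

end

theory Submission
  imports Defs
begin

text \<open>Alt-induced codes are non-empty, so \<open>Z\<close> and \<open>Z'\<close> are non-empty prefix codes. A
  factorization whose \<open>i\<close>-th factor is drawn from a prescribed prefix code \<open>S i\<close> is unique:
  its first factor is forced, so it can be cancelled and the argument repeated. Hence
  \<open>(Z, Z')\<close> is an alternative code and \<open>ZZ'\<close> is alt-induced; the same cancellation shows that
  \<open>ZZ'\<close> is a prefix code. The suffix case is the mirror image under word reversal, and the
  bifix case is the conjunction of both.\<close>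

lemma prefix_free_append_cancel:
  assumes "x @ y = x' @ y'" "x \<in> P" "x' \<in> P" "\<forall>a\<in>P. \<forall>b\<in>P. \<not> strict_prefix a b"
  shows "x = x' \<and> y = y'"
proof -
  have "prefix x (x' @ y')" "prefix x' (x' @ y')"
    using assms(1) by (metis prefixI)+
  then have "prefix x x' \<or> prefix x' x"
    using prefix_same_cases by blast
  then have "x = x'"
    using assms(2-4) by (auto simp: strict_prefix_def)
  with assms(1) show ?thesis by simp
qed

lemma concat_eq_imp_eq_if_prefix_free:
  assumes "\<And>i. \<forall>a\<in>S i. \<forall>b\<in>S i. \<not> strict_prefix a b" "\<And>i. [] \<notin> S i"
    and "\<forall>i<length us. us ! i \<in> S i" "\<forall>i<length vs. vs ! i \<in> S i"
    and "concat us = concat vs"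
  shows "us = vs"
  using assms
proof (induction us arbitrary: vs S)
  case Nil
  then show ?case
    by (cases vs) force+
next
  case (Cons u us)
  then obtain v vs' where vs: "vs = v # vs'"
    by (cases vs) force+
  have "u \<in> S 0" "v \<in> S 0"
    using Cons.prems(3,4) vs by force+
  then have "u = v \<and> concat us = concat vs'"
    using prefix_free_append_cancel[of u "concat us" v "concat vs'" "S 0"] Cons.prems(1,5) vs
    by simp
  moreover have "us = vs'"
    using Cons.prems vs calculation by (intro Cons.IH[of "\<lambda>i. S (Suc i)"]) auto
  ultimately show ?case
    using vs by simp
qed

text \<open>The factors are now indexed from the right: \<open>S 0\<close> holds the last one.\<close>

lemma concat_eq_imp_eq_if_suffix_free:
  assumes "\<And>i. \<forall>a\<in>S i. \<forall>b\<in>S i. \<not> strict_suffix a b" "\<And>i. [] \<notin> S i"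
    and "\<forall>i<length us. us ! (length us - Suc i) \<in> S i"
    and "\<forall>i<length vs. vs ! (length vs - Suc i) \<in> S i"
    and "concat us = concat vs"
  shows "us = vs"
proof -
  have "map rev (rev us) = map rev (rev vs)"
  proof (rule concat_eq_imp_eq_if_prefix_free[where S = "\<lambda>i. rev ` S i"])
    show "\<forall>a\<in>rev ` S i. \<forall>b\<in>rev ` S i. \<not> strict_prefix a b" for i
      using assms(1) by (auto simp: strict_suffix_to_prefix)
    show "[] \<notin> rev ` S i" for i
      using assms(2) by auto
    show "\<forall>i<length (map rev (rev us)). map rev (rev us) ! i \<in> rev ` S i"
      using assms(3) by (auto simp: rev_nth)
    show "\<forall>i<length (map rev (rev vs)). map rev (rev vs) ! i \<in> rev ` S i"
      using assms(4) by (auto simp: rev_nth)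
    show "concat (map rev (rev us)) = concat (map rev (rev vs))"
      using assms(5) by (metis rev_concat)
  qed
  then show ?thesis
    by (metis rev_map rev_rev_ident inj_map_eq_map inj_on_def)
qed

lemma conc_subset_Aplus: "X \<subseteq> Aplus A \<Longrightarrow> Y \<subseteq> Aplus A \<Longrightarrow> conc X Y \<subseteq> Aplus A"
  unfolding conc_def Aplus_def subset_iff by (auto simp: in_lists_conv_set)

lemma prefix_code_conc:
  assumes "prefix_code A Z" "prefix_code A Z'"
  shows "prefix_code A (conc Z Z')"
  unfolding prefix_code_def
proof (intro conjI ballI)
  show "conc Z Z' \<subseteq> Aplus A"
    using assms conc_subset_Aplus by (auto simp: prefix_code_def)
  fix x y
  assume "x \<in> conc Z Z'" "y \<in> conc Z Z'"
  then obtain z1 z1' z2 z2' where z: "x = z1 @ z1'" "y = z2 @ z2'"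
    "z1 \<in> Z" "z2 \<in> Z" "z1' \<in> Z'" "z2' \<in> Z'"
    by (auto simp: conc_def)
  show "\<not> strict_prefix x y"
  proof
    assume "strict_prefix x y"
    then obtain t where t: "y = x @ t" "t \<noteq> []"
      by (auto simp: strict_prefix_def prefix_def)
    then have "z1 @ (z1' @ t) = z2 @ z2'"
      using z by simp
    then have "z1' @ t = z2'"
      using prefix_free_append_cancel[of z1 "z1' @ t" z2 z2' Z] z(3,4) assms(1)
      by (simp add: prefix_code_def)
    then have "strict_prefix z1' z2'"
      using t by (auto simp: strict_prefix_def)
    then show False
      using assms(2) z by (auto simp: prefix_code_def)
  qed
qed

lemma suffix_code_iff_prefix_code_rev: "suffix_code A X \<longleftrightarrow> prefix_code A (rev ` X)"
  by (auto simp: suffix_code_def prefix_code_def Aplus_def strict_suffix_to_prefix)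

lemma rev_conc: "rev ` conc X Y = conc (rev ` Y) (rev ` X)"
  unfolding conc_def by (auto simp: image_iff) (metis rev_append rev_rev_ident)+

lemma suffix_code_conc:
  assumes "suffix_code A Z" "suffix_code A Z'"
  shows "suffix_code A (conc Z Z')"
  using assms prefix_code_conc[of A "rev ` Z'" "rev ` Z"]
  by (simp add: suffix_code_iff_prefix_code_rev rev_conc)

lemma alternative_code_if_prefix_codes:
  assumes "prefix_code A X" "prefix_code A Y" "X \<noteq> {}" "Y \<noteq> {}"
  shows "alternative_code A X Y"
  unfolding alternative_code_def
proof (intro conjI allI impI)
  show "X \<subseteq> Aplus A" "Y \<subseteq> Aplus A"
    using assms by (auto simp: prefix_code_def)
  fix b us vs
  assume "alt_fact X Y b us" "alt_fact X Y b vs" "concat us = concat vs"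
  then show "us = vs"
    using assms
    by (intro concat_eq_imp_eq_if_prefix_free[where S = "\<lambda>i. if even i = b then X else Y"])
      (auto simp: alt_fact_def prefix_code_def Aplus_def)
qed (use assms in auto)

text \<open>Read from the right, an alternating factorization of length \<open>n\<close> starting in the
  set selected by \<open>b\<close> ends in the set selected by \<open>odd n = b\<close>; this depends only on the
  parity of \<open>n\<close>, which similar factorizations share.\<close>

lemma alt_fact_from_right:
  assumes "alt_fact X Y b us" "i < length us"
  shows "us ! (length us - Suc i) \<in> (if even i = (odd (length us) = b) then X else Y)"
proof -
  have "even (length us - Suc i) \<longleftrightarrow> (even i \<longleftrightarrow> odd (length us))"
    using assms(2) by (auto simp: even_diff_nat)
  moreover have "length us - Suc i < length us"
    using assms(2) by simp
  ultimately show ?thesis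
    using assms(1) unfolding alt_fact_def by (smt (verit))
qed

lemma alternative_code_if_suffix_codes:
  assumes "suffix_code A X" "suffix_code A Y" "X \<noteq> {}" "Y \<noteq> {}"
  shows "alternative_code A X Y"
  unfolding alternative_code_def
proof (intro conjI allI impI)
  show "X \<subseteq> Aplus A" "Y \<subseteq> Aplus A"
    using assms by (auto simp: suffix_code_def)
  fix b us vs
  assume us: "alt_fact X Y b us" and vs: "alt_fact X Y b vs"
    and "even (length us) = even (length vs)" "concat us = concat vs"
  then show "us = vs"
    using assms alt_fact_from_right[OF us] alt_fact_from_right[OF vs]
    by (intro concat_eq_imp_eq_if_suffix_free
        [where S = "\<lambda>i. if even i = (odd (length us) = b) then X else Y"])
      (auto simp: suffix_code_def Aplus_def)
qed (use assms in auto)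

lemma alt_induced_code_nonempty: "alt_induced_code A Z \<Longrightarrow> Z \<noteq> {}"
  by (auto simp: alt_induced_code_def alternative_code_def conc_def)

theorem propositionP:
  fixes A :: "'a set" and Z Z' :: "'a list set"
  assumes "finite A" and "Z \<subseteq> Aplus A" and "Z' \<subseteq> Aplus A"
  shows "(prefix_alt_induced_code A Z \<and> prefix_alt_induced_code A Z'
            \<longrightarrow> prefix_alt_induced_code A (conc Z Z')) \<and>
         (suffix_alt_induced_code A Z \<and> suffix_alt_induced_code A Z'
            \<longrightarrow> suffix_alt_induced_code A (conc Z Z')) \<and>
         (bifix_alt_induced_code A Z \<and> bifix_alt_induced_code A Z'
            \<longrightarrow> bifix_alt_induced_code A (conc Z Z'))"
proof -
  have prefix: "prefix_alt_induced_code A (conc Z Z')"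
    if "prefix_code A Z" "prefix_code A Z'" "alt_induced_code A Z" "alt_induced_code A Z'"
  proof -
    have "alternative_code A Z Z'"
      using that by (simp add: alternative_code_if_prefix_codes alt_induced_code_nonempty)
    then show ?thesis
      using that prefix_code_conc
      unfolding prefix_alt_induced_code_def alt_induced_code_def by blast
  qed
  have suffix: "suffix_alt_induced_code A (conc Z Z')"
    if "suffix_code A Z" "suffix_code A Z'" "alt_induced_code A Z" "alt_induced_code A Z'"
  proof -
    have "alternative_code A Z Z'"
      using that by (simp add: alternative_code_if_suffix_codes alt_induced_code_nonempty)
    then show ?thesis
      using that suffix_code_conc
      unfolding suffix_alt_induced_code_def alt_induced_code_def by blast
  qed
  show ?thesis
    using prefix suffix
    unfolding prefix_alt_induced_code_def suffix_alt_induced_code_def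
      bifix_alt_induced_code_def bifix_code_def
    by blast
qed

end
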